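(* In the $E$-generic bisimulation game on an LTS $L=\langle S,A,\to\rangle$ (for any $E\subseteq\{\frown,\smile\}$), the configurations $\langle (s,t),c,m,*\rangle_S$ and $\langle (s,t),c,m,\checkmark\rangle_S$ are won by the same player, and so are $\langle (s,t),c,m,*\rangle_D$ and $\langle (s,t),c,m,\checkmark\rangle_D$.
   Context: An LTS is $\langle S,A,\to\rangle$ with states $S$, actions $A$ containing the internal action $\tau$, and $\to\subseteq S\times A\times S$; write $s\xrightarrow{a}t$. Generic bisimulation game. Let $\frown,\smile$ be formal tags and $E\subseteq\{\frown,\smile\}$. Spoiler-owned configurations $\langle (s,t),c,m,r\rangle_S$ and Duplicator-owned $\langle (s,t),c,m,r\rangle_D$ have $(s,t)\in S\times S$, $c\in (A\times S)\cup\{\dagger\}$, $m\in (S\times\{\frown,\smile\})\cup\{\dagger\}$, $r\in\{*,\checkmark\}$. From $\langle (s,t),c,m,r\rangle_S$ Spoiler may: (S1) move to $\langle (s,t),c,m,*\rangle_D$ if $c\neq\dagger$; (S2a) for some $s\xrightarrow{a}s'$, move to $\langle (s,t),(a,s'),(t,\frown),*\rangle_D$ if $c=\dagger$; (S2b) for some $s\xrightarrow{a}s'$, move to $\langle (s,t),(a,s'),(t,\frown),\checkmark\rangle_D$ if $c\neq (a,s')$; (S3) for some $t\xrightarrow{a}t'$, move to $\langle (t,s),(a,t'),(s,\frown),\checkmark\rangle_D$. From $\langle (u,v),(a,u'),(\bar v,f),r\rangle_D$ Duplicator may: (D1) move to $\langle (u',\bar v),\dagger,\dagger,\checkmark\rangle_S$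 if $a=\tau$; (D2) if $f=\frown$ and $\bar v\xrightarrow{a}v'$: (a) move to $\langle (u',v'),(a,u'),(v',\smile),*\rangle_S$, or (b) move to $\langle (u',v'),\dagger,\dagger,\checkmark\rangle_S$, or (c) only if $\smile\in E$, move to $\langle (u,v),(a,u'),(v',\smile),*\rangle_S$; (D3) for some $\bar v\xrightarrow{\tau}v'$: (a) move to $\langle (u,v'),(a,u'),(v',f),*\rangle_S$, or (b) only if $f=\smile$, move to $\langle (u',v'),\dagger,\dagger,\checkmark\rangle_S$, or (c) only if $f\in E$, move to $\langle (u,v),(a,u'),(v',f),*\rangle_S$. Duplicator wins a finite play if Spoiler gets stuck, and an infinite play if it has infinitely many $\checkmark$ rewards; other plays are won by Spoiler. A player wins a configuration if she has a strategy winning all plays starting in it. *)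

theory Defs
  imports Main
begin

text \<open>An LTS is given by a transition predicate step s a t (s --a--> t);
  states are the type 's, actions the type 'a, and tau is the internal action.\<close>

datatype tag = Frown | Smile
datatype rew = Star | Check
datatype player = Spoiler | Duplicator

text \<open>Configurations: Spoiler-owned (SConf) and Duplicator-owned (DConf).
  Components: pair (s,t); c (None = dagger); m (None = dagger); reward r.\<close>
datatype ('s, 'a) conf =
    SConf "'s \<times> 's" "('a \<times> 's) option" "('s \<times> tag) option" rew
  | DConf "'s \<times> 's" "('a \<times> 's) option" "('s \<times> tag) option" rew

fun owner :: "('s, 'a) conf \<Rightarrow> player" where
  "owner (SConf _ _ _ _) = Spoiler"
| "owner (DConf _ _ _ _) = Duplicator"

fun reward :: "('s, 'a) conf \<Rightarrow> rew" where
  "reward (SConf _ _ _ r) = r"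
| "reward (DConf _ _ _ r) = r"

inductive gmove :: "tag set \<Rightarrow> ('s \<Rightarrow> 'a \<Rightarrow> 's \<Rightarrow> bool) \<Rightarrow> 'a
    \<Rightarrow> ('s, 'a) conf \<Rightarrow> ('s, 'a) conf \<Rightarrow> bool"
  for E :: "tag set" and step :: "'s \<Rightarrow> 'a \<Rightarrow> 's \<Rightarrow> bool" and tau :: 'a where
  S1: "c \<noteq> None \<Longrightarrow> gmove E step tau (SConf (s,t) c m r) (DConf (s,t) c m Star)"
| S2a: "c = None \<Longrightarrow> step s a s' \<Longrightarrow>
     gmove E step tau (SConf (s,t) c m r) (DConf (s,t) (Some (a,s')) (Some (t,Frown)) Star)"
| S2b: "c \<noteq> Some (a,s') \<Longrightarrow> step s a s' \<Longrightarrow>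
     gmove E step tau (SConf (s,t) c m r) (DConf (s,t) (Some (a,s')) (Some (t,Frown)) Check)"
| S3: "step t a t' \<Longrightarrow>
     gmove E step tau (SConf (s,t) c m r) (DConf (t,s) (Some (a,t')) (Some (s,Frown)) Check)"
| D1: "a = tau \<Longrightarrow>
     gmove E step tau (DConf (u,v) (Some (a,u')) (Some (vb,f)) r) (SConf (u',vb) None None Check)"
| D2a: "f = Frown \<Longrightarrow> step vb a v' \<Longrightarrow>
     gmove E step tau (DConf (u,v) (Some (a,u')) (Some (vb,f)) r)
       (SConf (u',v') (Some (a,u')) (Some (v',Smile)) Star)"
| D2b: "f = Frown \<Longrightarrow> step vb a v' \<Longrightarrow>
     gmove E step tau (DConf (u,v) (Some (a,u')) (Some (vb,f)) r) (SConf (u',v') None None Check)"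
| D2c: "f = Frown \<Longrightarrow> step vb a v' \<Longrightarrow> Smile \<in> E \<Longrightarrow>
     gmove E step tau (DConf (u,v) (Some (a,u')) (Some (vb,f)) r)
       (SConf (u,v) (Some (a,u')) (Some (v',Smile)) Star)"
| D3a: "step vb tau v' \<Longrightarrow>
     gmove E step tau (DConf (u,v) (Some (a,u')) (Some (vb,f)) r)
       (SConf (u,v') (Some (a,u')) (Some (v',f)) Star)"
| D3b: "step vb tau v' \<Longrightarrow> f = Smile \<Longrightarrow>
     gmove E step tau (DConf (u,v) (Some (a,u')) (Some (vb,f)) r) (SConf (u',v') None None Check)"
| D3c: "step vb tau v' \<Longrightarrow> f \<in> E \<Longrightarrow>
     gmove E step tau (DConf (u,v) (Some (a,u')) (Some (vb,f)) r)
       (SConf (u,v) (Some (a,u')) (Some (v',f)) Star)"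

text \<open>Strategies are functions from nonempty histories (finite play prefixes)
  to the next configuration; they must propose legal moves whenever one exists.\<close>
type_synonym ('s, 'a) strategy = "('s, 'a) conf list \<Rightarrow> ('s, 'a) conf"

definition legal_strategy where
  "legal_strategy E step tau p (\<sigma> :: ('s, 'a) strategy) \<longleftrightarrow>
     (\<forall>h. h \<noteq> [] \<and> owner (last h) = p \<and> (\<exists>w. gmove E step tau (last h) w)
          \<longrightarrow> gmove E step tau (last h) (\<sigma> h))"

definition fin_play where
  "fin_play E step tau v (xs :: ('s, 'a) conf list) \<longleftrightarrow>
     xs \<noteq> [] \<and> hd xs = v \<and>
     (\<forall>i. Suc i < length xs \<longrightarrow> gmove E step tau (xs ! i) (xs ! Suc i)) \<and>
     (\<nexists>w. gmove E step tau (last xs) w)"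

definition inf_play where
  "inf_play E step tau v (\<rho> :: nat \<Rightarrow> ('s, 'a) conf) \<longleftrightarrow>
     \<rho> 0 = v \<and> (\<forall>i. gmove E step tau (\<rho> i) (\<rho> (Suc i)))"

definition fin_consistent where
  "fin_consistent p (\<sigma> :: ('s, 'a) strategy) xs \<longleftrightarrow>
     (\<forall>i. Suc i < length xs \<longrightarrow> owner (xs ! i) = p \<longrightarrow> xs ! Suc i = \<sigma> (take (Suc i) xs))"

definition inf_consistent where
  "inf_consistent p (\<sigma> :: ('s, 'a) strategy) \<rho> \<longleftrightarrow>
     (\<forall>i. owner (\<rho> i) = p \<longrightarrow> \<rho> (Suc i) = \<sigma> (map \<rho> [0..<Suc i]))"

definition fin_winner :: "('s, 'a) conf list \<Rightarrow> player" where
  "fin_winner xs = (if owner (last xs) = Spoiler then Duplicator else Spoiler)"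

definition inf_winner :: "(nat \<Rightarrow> ('s, 'a) conf) \<Rightarrow> player" where
  "inf_winner \<rho> = (if (\<exists>\<^sub>\<infinity>i. reward (\<rho> i) = Check) then Duplicator else Spoiler)"

definition wins :: "tag set \<Rightarrow> ('s \<Rightarrow> 'a \<Rightarrow> 's \<Rightarrow> bool) \<Rightarrow> 'a \<Rightarrow> player
    \<Rightarrow> ('s, 'a) conf \<Rightarrow> bool" where
  "wins E step tau p v \<longleftrightarrow>
     (\<exists>\<sigma>. legal_strategy E step tau p \<sigma> \<and>
       (\<forall>xs. fin_play E step tau v xs \<and> fin_consistent p \<sigma> xs \<longrightarrow> fin_winner xs = p) \<and>
       (\<forall>\<rho>. inf_play E step tau v \<rho> \<and> inf_consistent p \<sigma> \<rho> \<longrightarrow> inf_winner \<rho> = p))"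

end

theory Submission
  imports Defs "HOL-Library.Infinite_Set"
begin

text \<open>The reward of a configuration influences neither its owner nor its moves, and the
  winning condition (Spoiler stuck, or infinitely many rewards) ignores the reward of the
  first configuration of a play. Hence two configurations differing only in their reward
  have the same plays up to their first position, and a winning strategy from one becomes
  a winning strategy from the other once the first entry of each history is swapped.\<close>

lemma gmove_SConf_reward_cong:
  "gmove E step tau (SConf (s,t) c m r) w \<longleftrightarrow> gmove E step tau (SConf (s,t) c m r') w"
  by (auto elim!: gmove.cases intro: gmove.intros)

lemma gmove_DConf_reward_cong:
  "gmove E step tau (DConf (s,t) c m r) w \<longleftrightarrow> gmove E step tau (DConf (s,t) c m r') w"
  by (auto elim!: gmove.cases intro: gmove.intros)

definition replace_head :: "('s,'a) conf \<Rightarrow> ('s,'a) conf \<Rightarrow> ('s,'a) conf list \<Rightarrow> ('s,'a) conf list"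
  where "replace_head v1 v2 h = (case h of [] \<Rightarrow> [] | x # xs \<Rightarrow> (if x = v2 then v1 else x) # xs)"

lemma replace_head_Cons [simp]: "replace_head v1 v2 (v2 # xs) = v1 # xs"
  by (simp add: replace_head_def)

lemma legal_strategy_replace_head:
  assumes own: "owner v1 = owner v2"
    and mv: "\<And>w. gmove E step tau v1 w \<longleftrightarrow> gmove E step tau v2 w"
    and leg: "legal_strategy E step tau p \<sigma>"
  shows "legal_strategy E step tau p (\<sigma> \<circ> replace_head v1 v2)"
  unfolding legal_strategy_def
proof (intro allI impI)
  fix h assume h: "h \<noteq> [] \<and> owner (last h) = p \<and> (\<exists>w. gmove E step tau (last h) w)"
  let ?h' = "replace_head v1 v2 h"
  have leg_h': "gmove E step tau (last ?h') (\<sigma> ?h')"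
    if "?h' \<noteq> []" "owner (last ?h') = p" "\<exists>w. gmove E step tau (last ?h') w"
    using leg that unfolding legal_strategy_def by blast
  obtain x xs where hx: "h = x # xs" using h by (cases h) auto
  show "gmove E step tau (last h) ((\<sigma> \<circ> replace_head v1 v2) h)"
  proof (cases "h = [v2]")
    case True
    then show ?thesis using h leg_h' own mv by simp
  next
    case False
    then have "last ?h' = last h" using hx by (cases xs) (simp_all add: replace_head_def)
    moreover have "?h' \<noteq> []" using hx by (simp add: replace_head_def)
    ultimately show ?thesis using h leg_h' by simp
  qed
qed

lemma fin_play_replace_head:
  assumes mv: "\<And>w. gmove E step tau v1 w \<longleftrightarrow> gmove E step tau v2 w"
    and fp: "fin_play E step tau v2 (v2 # ys)"
  shows "fin_play E step tau v1 (v1 # ys)"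
  unfolding fin_play_def
proof (intro conjI)
  show "\<forall>i. Suc i < length (v1 # ys) \<longrightarrow> gmove E step tau ((v1 # ys) ! i) ((v1 # ys) ! Suc i)"
  proof (intro allI impI)
    fix i assume "Suc i < length (v1 # ys)"
    then have "gmove E step tau ((v2 # ys) ! i) ((v2 # ys) ! Suc i)"
      using fp unfolding fin_play_def by simp
    then show "gmove E step tau ((v1 # ys) ! i) ((v1 # ys) ! Suc i)" using mv by (cases i) auto
  qed
  show "\<nexists>w. gmove E step tau (last (v1 # ys)) w"
    using fp mv unfolding fin_play_def by (cases ys) auto
qed auto

lemma fin_consistent_replace_head:
  assumes own: "owner v1 = owner v2"
    and fc: "fin_consistent p (\<sigma> \<circ> replace_head v1 v2) (v2 # ys)"
  shows "fin_consistent p \<sigma> (v1 # ys)"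
  unfolding fin_consistent_def
proof (intro allI impI)
  fix i assume i: "Suc i < length (v1 # ys)" "owner ((v1 # ys) ! i) = p"
  then have "owner ((v2 # ys) ! i) = p" using own by (cases i) auto
  then show "(v1 # ys) ! Suc i = \<sigma> (take (Suc i) (v1 # ys))"
    using fc i(1) unfolding fin_consistent_def by simp
qed

lemma inf_play_fun_upd_0:
  assumes mv: "\<And>w. gmove E step tau v1 w \<longleftrightarrow> gmove E step tau v2 w"
    and ip: "inf_play E step tau v2 \<rho>"
  shows "inf_play E step tau v1 (\<rho>(0 := v1))"
  unfolding inf_play_def
proof (intro conjI allI)
  fix i
  have "gmove E step tau (\<rho> i) (\<rho> (Suc i))" and "\<rho> 0 = v2"
    using ip unfolding inf_play_def by simp_all
  then show "gmove E step tau ((\<rho>(0 := v1)) i) ((\<rho>(0 := v1)) (Suc i))" using mv by (cases i) auto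
qed simp

lemma map_upt_fun_upd_0:
  assumes "\<rho> 0 = v2"
  shows "map (\<rho>(0 := v1)) [0..<Suc i] = replace_head v1 v2 (map \<rho> [0..<Suc i])"
proof -
  have "map (\<rho>(0 := v1)) [Suc 0..<Suc i] = map \<rho> [Suc 0..<Suc i]" by (rule map_cong) auto
  moreover have "[0..<Suc i] = 0 # [Suc 0..<Suc i]" by (rule upt_conv_Cons) simp
  ultimately show ?thesis using assms by simp
qed

lemma inf_consistent_fun_upd_0:
  assumes own: "owner v1 = owner v2" and r0: "\<rho> 0 = v2"
    and ic: "inf_consistent p (\<sigma> \<circ> replace_head v1 v2) \<rho>"
  shows "inf_consistent p \<sigma> (\<rho>(0 := v1))"
  unfolding inf_consistent_def
proof (intro allI impI)
  fix i assume "owner ((\<rho>(0 := v1)) i) = p"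
  then have "owner (\<rho> i) = p" using own r0 by (cases i) auto
  then show "(\<rho>(0 := v1)) (Suc i) = \<sigma> (map (\<rho>(0 := v1)) [0..<Suc i])"
    using ic map_upt_fun_upd_0[of \<rho> v2 v1, OF r0] unfolding inf_consistent_def by simp
qed

lemma inf_winner_fun_upd_0: "inf_winner (\<rho>(0 := v)) = inf_winner \<rho>"
proof -
  have "(\<exists>\<^sub>\<infinity>i. reward ((\<rho>(0 := v)) i) = Check) \<longleftrightarrow> (\<exists>\<^sub>\<infinity>i. reward (\<rho> i) = Check)"
    unfolding INFM_nat by (metis fun_upd_apply gr_implies_not0)
  then show ?thesis unfolding inf_winner_def by simp
qed

lemma wins_if_same_owner_and_moves:
  assumes own: "owner v1 = owner v2"
    and mv: "\<And>w. gmove E step tau v1 w \<longleftrightarrow> gmove E step tau v2 w"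
    and W: "wins E step tau p v1"
  shows "wins E step tau p v2"
proof -
  obtain \<sigma> where leg: "legal_strategy E step tau p \<sigma>"
    and fw: "\<And>xs. fin_play E step tau v1 xs \<Longrightarrow> fin_consistent p \<sigma> xs \<Longrightarrow> fin_winner xs = p"
    and iw: "\<And>\<rho>. inf_play E step tau v1 \<rho> \<Longrightarrow> inf_consistent p \<sigma> \<rho> \<Longrightarrow> inf_winner \<rho> = p"
    using W unfolding wins_def by blast
  let ?\<sigma> = "\<sigma> \<circ> replace_head v1 v2"
  have "fin_winner xs = p"
    if fp: "fin_play E step tau v2 xs" and fc: "fin_consistent p ?\<sigma> xs" for xs
  proof -
    from fp obtain ys where xs: "xs = v2 # ys" unfolding fin_play_def by (cases xs) auto
    have "fin_winner (v1 # ys) = p"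
      using fw fin_play_replace_head[OF mv] fin_consistent_replace_head[OF own] fp fc xs by blast
    moreover have "owner (last (v1 # ys)) = owner (last xs)" using xs own by (cases ys) auto
    ultimately show ?thesis unfolding fin_winner_def by simp
  qed
  moreover have "inf_winner \<rho> = p"
    if ip: "inf_play E step tau v2 \<rho>" and ic: "inf_consistent p ?\<sigma> \<rho>" for \<rho>
  proof -
    have "\<rho> 0 = v2" using ip unfolding inf_play_def by simp
    then have "inf_winner (\<rho>(0 := v1)) = p"
      using iw inf_play_fun_upd_0[OF mv ip] inf_consistent_fun_upd_0[OF own _ ic] by blast
    then show ?thesis by (simp add: inf_winner_fun_upd_0)
  qed
  ultimately show ?thesis
    unfolding wins_def using legal_strategy_replace_head[OF own mv leg] by blast
qed

theorem proposition5p7: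
  fixes E :: "tag set" and step :: "'s \<Rightarrow> 'a \<Rightarrow> 's \<Rightarrow> bool" and tau :: 'a
    and p :: player and s t :: 's
    and c :: "('a \<times> 's) option" and m :: "('s \<times> tag) option"
  shows "(wins E step tau p (SConf (s,t) c m Star) \<longleftrightarrow> wins E step tau p (SConf (s,t) c m Check))
       \<and> (wins E step tau p (DConf (s,t) c m Star) \<longleftrightarrow> wins E step tau p (DConf (s,t) c m Check))"
proof -
  have "wins E step tau p (SConf (s,t) c m r) \<Longrightarrow> wins E step tau p (SConf (s,t) c m r')" for r r'
    by (rule wins_if_same_owner_and_moves[OF _ gmove_SConf_reward_cong]) simp
  moreover have "wins E step tau p (DConf (s,t) c m r) \<Longrightarrow> wins E step tau p (DConf (s,t) c m r')"
    for r r'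
    by (rule wins_if_same_owner_and_moves[OF _ gmove_DConf_reward_cong]) simp
  ultimately show ?thesis by blast
qed

end
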